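(* For every $\varepsilon>0$ there is $\varepsilon'=\varepsilon'(\varepsilon)>0$, with $\varepsilon'(\varepsilon)\to0$ as $\varepsilon\to0$, such that $$\dim_H Z(\varepsilon)\le\varepsilon'+\varepsilon+\varepsilon\log_2 15,$$ where $$Z(\varepsilon)=\bigcap_{N=1}^\infty\bigcup_{n=N}^\infty\bigcup_{m=1}^\infty\bigcup_{(\mathbf i,\mathbf j)\in\mathcal F^{n,m}(\varepsilon)}\widehat Q_{\mathbf i}^{\mathbf j}.$$
   Context: $\mathbb T=\mathbb R/\mathbb Z$, $Tx=2x\bmod1$, $d$ the usual distance on $\mathbb T$. $\mathcal D_n$ is the set of dyadic intervals $[m/2^n,(m+1)/2^n)$. For $i,j\ge1$, $Q_i^j=\{x:d(T^ix,x)\le2^{-j}\}$ and $\widehat Q_i^j$ is the union of intervals in $\mathcal D_{i+j}$ meeting $Q_i^j$; for $\mathbf i=(i_1,\dots,i_k)$, $\mathbf j=(j_1,\dots,j_k)$, $\widehat Q_{\mathbf i}^{\mathbf j}=\bigcap_{\nu=1}^k\widehat Q_{i_\nu}^{j_\nu}$. $\mathcal F_k(\varepsilon)$ is the set of $(i_1\cdots i_k;j_1\cdots j_k)$ of positive integers, $i_1<\dots<i_k$, with (i) $i_{l+1}-i_l\ge j_l$ for $1\le l<k$, (ii) $k\le\varepsilon i_k$, (iii) $i_k-\sum_{1\le l<k}j_l\le\varepsilon i_k$; $\mathcal F^{n,m}(\varepsilon)$ is the union over $k$ of those elements with $i_k=n$, $j_k=m$. (The $\varepsilon'$ is the exponent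 for which $\#\mathcal F^{n,m}(\varepsilon)\le C2^{\varepsilon'n}$ for all $n,m$.) *)

theory Defs
  imports "HOL-Analysis.Analysis"
begin

text \<open>The circle T = R/Z is represented by the interval [0,1) of reals.\<close>

definition circ_dist :: "real \<Rightarrow> real \<Rightarrow> real" where
  "circ_dist x y = min (frac (x - y)) (1 - frac (x - y))"

definition doubling :: "real \<Rightarrow> real" where
  "doubling x = frac (2 * x)"

definition circ_diam :: "real set \<Rightarrow> real" where
  "circ_diam U = (if U = {} then 0 else Sup {circ_dist x y | x y. x \<in> U \<and> y \<in> U})"

definition hcontent :: "real \<Rightarrow> real \<Rightarrow> real set \<Rightarrow> ennreal" where
  "hcontent s \<delta> A = (INF U \<in> {U :: nat \<Rightarrow> real set. (\<forall>k. U k \<subseteq> {0..<1} \<and> circ_diam (U k) \<le> \<delta>)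
        \<and> A \<subseteq> (\<Union>k. U k)}. (\<Sum>k. ennreal (circ_diam (U k) powr s)))"

definition hmeasure :: "real \<Rightarrow> real set \<Rightarrow> ennreal" where
  "hmeasure s A = (SUP \<delta> \<in> {0<..}. hcontent s \<delta> A)"

definition hdim :: "real set \<Rightarrow> real" where
  "hdim A = Inf {s. 0 \<le> s \<and> hmeasure s A = 0}"

definition dyadic :: "nat \<Rightarrow> nat \<Rightarrow> real set" where
  "dyadic n m = {real m / 2 ^ n ..< (real m + 1) / 2 ^ n}"

definition Q :: "nat \<Rightarrow> nat \<Rightarrow> real set" where
  "Q i j = {x \<in> {0..<1}. circ_dist ((doubling ^^ i) x) x \<le> 1 / 2 ^ j}"

definition Qhat :: "nat \<Rightarrow> nat \<Rightarrow> real set" where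
  "Qhat i j = \<Union> {dyadic (i + j) m | m. m < 2 ^ (i + j) \<and> dyadic (i + j) m \<inter> Q i j \<noteq> {}}"

definition Qhat_multi :: "nat list \<Rightarrow> nat list \<Rightarrow> real set" where
  "Qhat_multi is js = (\<Inter> l \<in> {..<length is}. Qhat (is ! l) (js ! l))"

text \<open>F^{n,m}(eps): tuples (i_1..i_k; j_1..j_k), k >= 1, as two lists of length k.\<close>

definition Fset :: "real \<Rightarrow> nat \<Rightarrow> nat \<Rightarrow> (nat list \<times> nat list) set" where
  "Fset \<epsilon> n m = {(is, js). 1 \<le> length is \<and> length js = length is
     \<and> (\<forall>l < length is. 0 < is ! l \<and> 0 < js ! l)
     \<and> sorted_wrt (<) is
     \<and> (\<forall>l. l + 1 < length is \<longrightarrow> js ! l \<le> is ! (l + 1) - is ! l)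
     \<and> real (length is) \<le> \<epsilon> * real (is ! (length is - 1))
     \<and> real (is ! (length is - 1)) - (\<Sum>l < length is - 1. real (js ! l))
          \<le> \<epsilon> * real (is ! (length is - 1))
     \<and> is ! (length is - 1) = n \<and> js ! (length is - 1) = m}"

definition Zset :: "real \<Rightarrow> real set" where
  "Zset \<epsilon> = (\<Inter> N \<in> {1..}. \<Union> n \<in> {N..}. \<Union> m \<in> {1..}. \<Union> (is, js) \<in> Fset \<epsilon> n m. Qhat_multi is js)"

end

theory Submission
  imports Defs "HOL-Real_Asymp.Real_Asymp"
begin

(*
  A point x of Q i j with floor (2^i x) = a satisfies (2^i - 1) x = a + z + d with z in {-1, 0, 1}
  and |d| <= 2^-j, so it lies within 2 * 2^-(i+j) of one of three period-i points of the doubling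
  map.  Hence every dyadic cell of level i meets Qhat i j in at most 15 cells of level i + j.  For
  (is, js) in F^{n,m} the gaps between consecutive blocks contribute free factors
  2^(i_(l+1) - i_l - j_l), so Qhat_multi is js is covered by at most 15^k 2^(n - sum_(l<k) j_l)
  <= 2^((eps + eps log2 15) n) cells of level n + m.  An element of F^{n,m} is determined by two
  subsets of {1..n} with at most eps n elements, whence #F^{n,m} <= 2^(eps' n) with eps' -> 0.
  Summing 2^(-s(n+m)) over these cells for n >= N shows that the s-dimensional Hausdorff measure
  of Z eps vanishes for every s > eps' + eps + eps log2 15.
*)

section \<open>Dyadic cells\<close>

definition dyadic_index :: "nat \<Rightarrow> real \<Rightarrow> nat" where
  "dyadic_index r x = nat \<lfloor>2 ^ r * x\<rfloor>"

lemma mem_dyadic_iff: "x \<in> dyadic r b \<longleftrightarrow> 0 \<le> x \<and> dyadic_index r x = b"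
proof -
  have "x \<in> dyadic r b \<longleftrightarrow> \<lfloor>2 ^ r * x\<rfloor> = int b"
    unfolding dyadic_def floor_eq_iff by (auto simp: field_simps)
  also have "\<dots> \<longleftrightarrow> 0 \<le> x \<and> dyadic_index r x = b"
  proof -
    have "\<lfloor>2 ^ r * x\<rfloor> = int b \<Longrightarrow> 0 \<le> x"
      by (metis floor_less_zero linorder_not_less of_nat_0_le_iff zero_le_mult_iff
          zero_less_numeral zero_less_power)
    then show ?thesis
      unfolding dyadic_index_def by auto
  qed
  finally show ?thesis .
qed

lemma dyadic_index_add_div:
  assumes "0 \<le> x"
  shows "dyadic_index (r + p) x div 2 ^ p = dyadic_index r x"
proof -
  have "\<lfloor>2 ^ (r + p) * x\<rfloor> div 2 ^ p = \<lfloor>2 ^ (r + p) * x / 2 ^ p\<rfloor>"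
    by (metis floor_divide_real_eq_div of_int_numeral of_int_power zero_le_numeral zero_le_power)
  also have "2 ^ (r + p) * x / 2 ^ p = 2 ^ r * x"
    by (simp add: power_add)
  finally have "\<lfloor>2 ^ (r + p) * x\<rfloor> div 2 ^ p = \<lfloor>2 ^ r * x\<rfloor>" .
  moreover have "0 \<le> \<lfloor>2 ^ (r + p) * x\<rfloor>"
    using assms by simp
  ultimately show ?thesis
    unfolding dyadic_index_def by (metis nat_div_distrib nat_numeral nat_power_eq zero_le_numeral)
qed

lemma dyadic_index_less:
  assumes "x \<in> {0..<1}"
  shows "dyadic_index r x < 2 ^ r"
proof -
  have "\<lfloor>2 ^ r * x\<rfloor> < 2 ^ r"
    using assms by (simp add: floor_less_iff)
  then show ?thesis
    using assms unfolding dyadic_index_def by (simp add: nat_less_iff)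
qed

lemma dyadic_subset:
  assumes "b < 2 ^ r"
  shows "dyadic r b \<subseteq> {0..<1}"
proof -
  have "real b + 1 \<le> 2 ^ r"
    using assms by (metis Suc_leI of_nat_Suc of_nat_le_iff of_nat_numeral of_nat_power add.commute)
  then have "(real b + 1) / 2 ^ r \<le> 1"
    by simp
  then show ?thesis
    unfolding dyadic_def by auto
qed

lemma finite_dyadic_index_image:
  assumes "S \<subseteq> {0..<1}"
  shows "finite (dyadic_index r ` S)"
proof -
  have "dyadic_index r ` S \<subseteq> {..<2 ^ r}"
    using assms dyadic_index_less by fastforce
  then show ?thesis
    using finite_subset by blast
qed

lemma card_dyadic_index_image_le_power:
  assumes "S \<subseteq> {0..<1}"
  shows "card (dyadic_index r ` S) \<le> 2 ^ r"
proof -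
  have "dyadic_index r ` S \<subseteq> {..<2 ^ r}"
    using assms dyadic_index_less by fastforce
  then show ?thesis
    using card_mono[of "{..<2 ^ r}"] by fastforce
qed

lemma card_dyadic_index_image_le:
  assumes "S \<subseteq> {0..<1}" "r \<le> i"
  shows "card (dyadic_index i ` S) \<le> 2 ^ (i - r) * card (dyadic_index r ` S)"
proof -
  define p :: nat where "p = 2 ^ (i - r)"
  have fin: "finite (dyadic_index r ` S \<times> {..<p})"
    using finite_dyadic_index_image[OF assms(1)] by simp
  have "dyadic_index i ` S \<subseteq> (\<lambda>(c, q). c * p + q) ` (dyadic_index r ` S \<times> {..<p})"
  proof
    fix a assume "a \<in> dyadic_index i ` S"
    then obtain x where x: "x \<in> S" "a = dyadic_index (r + (i - r)) x"
      using assms(2) by auto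
    have "a div p = dyadic_index r x"
      unfolding x(2) p_def using assms(1) x(1) by (intro dyadic_index_add_div) auto
    moreover have "a = a div p * p + a mod p"
      by simp
    moreover have "a mod p < p"
      by (simp add: p_def)
    ultimately show "a \<in> (\<lambda>(c, q). c * p + q) ` (dyadic_index r ` S \<times> {..<p})"
      using x(1) by (intro image_eqI[of _ _ "(a div p, a mod p)"]) auto
  qed
  then have "card (dyadic_index i ` S) \<le> card ((\<lambda>(c, q). c * p + q) ` (dyadic_index r ` S \<times> {..<p}))"
    using fin by (intro card_mono) auto
  also have "\<dots> \<le> card (dyadic_index r ` S \<times> {..<p})"
    using fin by (rule card_image_le)
  finally show ?thesis
    by (simp add: card_cartesian_product p_def mult.commute)
qed

section \<open>The circle and the doubling map\<close>

lemma circ_dist_nonneg: "0 \<le> circ_dist x y"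
  unfolding circ_dist_def by (simp add: frac_lt_1 less_imp_le)

lemma circ_dist_le_half: "circ_dist x y \<le> 1 / 2"
  unfolding circ_dist_def by linarith

lemma circ_dist_le_abs:
  assumes "\<bar>x - y\<bar> < 1"
  shows "circ_dist x y \<le> \<bar>x - y\<bar>"
proof (cases "0 \<le> x - y")
  case True
  then show ?thesis
    using assms unfolding circ_dist_def by (simp add: frac_eq)
next
  case False
  then have "\<lfloor>x - y\<rfloor> = -1"
    using assms by (simp add: floor_eq_iff)
  then show ?thesis
    using False unfolding circ_dist_def frac_def by simp
qed

lemma circ_dist_nearest_int: "\<exists>z::int. \<bar>x - y - z\<bar> = circ_dist x y"
proof (cases "frac (x - y) \<le> 1 - frac (x - y)")
  case True
  then show ?thesis
    unfolding circ_dist_def by (intro exI[of _ "\<lfloor>x - y\<rfloor>"]) (simp add: frac_def)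
next
  case False
  then show ?thesis
    unfolding circ_dist_def by (intro exI[of _ "\<lfloor>x - y\<rfloor> + 1"]) (auto simp: frac_def)
qed

lemma circ_diam_nonneg: "0 \<le> circ_diam U"
proof (cases "U = {}")
  case False
  then obtain x where "x \<in> U"
    by auto
  moreover have "bdd_above {circ_dist x y | x y. x \<in> U \<and> y \<in> U}"
    by (rule bdd_aboveI[where M = 1]) (auto simp: circ_dist_def)
  ultimately have "circ_dist x x \<le> Sup {circ_dist x y | x y. x \<in> U \<and> y \<in> U}"
    by (intro cSup_upper) auto
  then show ?thesis
    using False circ_dist_nonneg[of x x] unfolding circ_diam_def by simp
qed (simp add: circ_diam_def)

lemma circ_diam_dyadic_le: "circ_diam (dyadic r b) \<le> 1 / 2 ^ r"
proof (cases "dyadic r b = {}")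
  case False
  have "circ_dist x y \<le> 1 / 2 ^ r" if "x \<in> dyadic r b" "y \<in> dyadic r b" for x y
  proof -
    have "\<bar>x - y\<bar> < 1 / 2 ^ r"
      using that unfolding dyadic_def by (auto simp: abs_less_iff add_divide_distrib)
    moreover have "1 / 2 ^ r \<le> (1::real)"
      by simp
    ultimately show ?thesis
      using circ_dist_le_abs[of x y] by linarith
  qed
  then have "Sup {circ_dist x y | x y. x \<in> dyadic r b \<and> y \<in> dyadic r b} \<le> 1 / 2 ^ r"
    using False by (intro cSup_least) blast+
  then show ?thesis
    using False unfolding circ_diam_def by simp
qed (simp add: circ_diam_def)

lemma doubling_funpow:
  assumes "x \<in> {0..<1}"
  shows "(doubling ^^ i) x = frac (2 ^ i * x)"
proof (induction i)
  case 0
  then show ?case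
    using assms by (simp add: frac_eq)
next
  case (Suc i)
  have "frac (2 * frac t) = frac (2 * t)" for t :: real
    using floor_diff_of_int[of "2 * t" "2 * \<lfloor>t\<rfloor>"] by (simp add: frac_def algebra_simps)
  then show ?case
    using Suc by (simp add: doubling_def mult.assoc)
qed

section \<open>Dyadic cells meeting the sets Qhat\<close>

lemma Q_near_periodic_point:
  assumes "0 < i" "x \<in> Q i j"
  shows "\<exists>z\<in>{-1, 0, 1::int}. \<bar>x - (\<lfloor>2 ^ i * x\<rfloor> + z) / (2 ^ i - 1)\<bar> \<le> 2 / 2 ^ (i + j)"
proof -
  define p :: real where "p = 2 ^ i"
  define y where "y = p * x - \<lfloor>p * x\<rfloor>"
  have p: "2 \<le> p"
    unfolding p_def using power_increasing[of 1 i "2::real"] assms(1) by simp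
  have x: "x \<in> {0..<1}"
    using assms(2) unfolding Q_def by auto
  have "(doubling ^^ i) x = y"
    using doubling_funpow[OF x] unfolding y_def p_def frac_def by simp
  then have dist: "circ_dist y x \<le> 1 / 2 ^ j"
    using assms(2) unfolding Q_def by simp
  obtain z :: int where z: "\<bar>y - x - z\<bar> = circ_dist y x"
    using circ_dist_nearest_int by blast
  have "0 \<le> y" "y < 1"
    unfolding y_def using of_int_floor_le[of "p * x"] real_of_int_floor_add_one_gt[of "p * x"]
    by linarith+
  then have "\<bar>y - x\<bar> < 1"
    using x by (simp add: abs_less_iff)
  then have "\<bar>z\<bar> < 2"
    using z circ_dist_le_half[of y x] by linarith
  then have "z \<in> {-1, 0, 1}"
    by auto
  moreover have "x - (\<lfloor>p * x\<rfloor> + z) / (p - 1) = (y - x - z) / (p - 1)"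
    using p unfolding y_def by (simp add: field_simps)
  moreover have "\<bar>y - x - z\<bar> / (p - 1) \<le> 2 / 2 ^ (i + j)"
  proof -
    have "\<bar>y - x - z\<bar> / (p - 1) \<le> (1 / 2 ^ j) / (p - 1)"
      using z dist p by (intro divide_right_mono) auto
    also have "\<dots> \<le> 2 / 2 ^ (i + j)"
      using p unfolding p_def by (simp add: power_add field_simps)
    finally show ?thesis .
  qed
  ultimately show ?thesis
    using p unfolding p_def by (auto simp: abs_divide)
qed

lemma dyadic_index_Q_near_periodic_point:
  assumes "0 < i" "x \<in> Q i j"
  shows "\<exists>z\<in>{-1, 0, 1::int}.
           \<bar>int (dyadic_index (i + j) x) - \<lfloor>2 ^ (i + j) * (\<lfloor>2 ^ i * x\<rfloor> + z) / (2 ^ i - 1)\<rfloor>\<bar> \<le> 2"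
proof -
  obtain z where z: "z \<in> {-1, 0, 1}" "\<bar>x - (\<lfloor>2 ^ i * x\<rfloor> + z) / (2 ^ i - 1)\<bar> \<le> 2 / 2 ^ (i + j)"
    using Q_near_periodic_point[OF assms] by blast
  define c where "c = 2 ^ (i + j) * (\<lfloor>2 ^ i * x\<rfloor> + z) / (2 ^ i - 1)"
  have "2 ^ (i + j) * x - c = 2 ^ (i + j) * (x - (\<lfloor>2 ^ i * x\<rfloor> + z) / (2 ^ i - 1))"
    unfolding c_def by (simp add: right_diff_distrib)
  then have "\<bar>2 ^ (i + j) * x - c\<bar> = 2 ^ (i + j) * \<bar>x - (\<lfloor>2 ^ i * x\<rfloor> + z) / (2 ^ i - 1)\<bar>"
    by (simp add: abs_mult)
  also have "\<dots> \<le> 2 ^ (i + j) * (2 / 2 ^ (i + j))"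
    using z(2) by (intro mult_left_mono) auto
  also have "\<dots> = 2"
    by simp
  finally have lower: "c - 2 \<le> 2 ^ (i + j) * x" and upper: "2 ^ (i + j) * x \<le> c + 2"
    by (simp_all add: abs_le_iff)
  have "\<lfloor>c\<rfloor> - 2 \<le> \<lfloor>2 ^ (i + j) * x\<rfloor>"
    unfolding le_floor_iff using lower of_int_floor_le[of c] by linarith
  moreover have "\<lfloor>2 ^ (i + j) * x\<rfloor> \<le> \<lfloor>c\<rfloor> + 2"
    unfolding floor_le_iff using upper real_of_int_floor_add_one_gt[of c] by linarith
  moreover have "int (dyadic_index (i + j) x) = \<lfloor>2 ^ (i + j) * x\<rfloor>"
    using assms(2) unfolding dyadic_index_def Q_def by simp
  ultimately show ?thesis
    using z(1) unfolding c_def by fastforce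
qed

lemma card_dyadic_index_Q_cell_le:
  assumes "0 < i"
  shows "card (dyadic_index (i + j) ` {x \<in> Q i j. dyadic_index i x = a}) \<le> 15"
proof -
  define c :: "int \<Rightarrow> int" where "c z = \<lfloor>2 ^ (i + j) * (int a + z) / (2 ^ i - 1 :: real)\<rfloor>" for z
  define B where "B z = nat ` {c z - 2 .. c z + 2}" for z
  have "dyadic_index (i + j) ` {x \<in> Q i j. dyadic_index i x = a} \<subseteq> (\<Union>z\<in>{-1, 0, 1}. B z)"
  proof
    fix w assume "w \<in> dyadic_index (i + j) ` {x \<in> Q i j. dyadic_index i x = a}"
    then obtain x where x: "x \<in> Q i j" "dyadic_index i x = a" "w = dyadic_index (i + j) x"
      by blast
    then have floor_eq: "\<lfloor>2 ^ i * x\<rfloor> = int a"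
      unfolding dyadic_index_def Q_def by auto
    obtain z where "z \<in> {-1, 0, 1}" "\<bar>int w - c z\<bar> \<le> 2"
      using dyadic_index_Q_near_periodic_point[OF assms x(1)]
      unfolding c_def x(3) floor_eq by blast
    then show "w \<in> (\<Union>z\<in>{-1, 0, 1}. B z)"
      unfolding B_def by (auto intro!: image_eqI[of w nat "int w"])
  qed
  moreover have "finite (\<Union>z\<in>{-1, 0, 1}. B z)"
    unfolding B_def by simp
  moreover have "card (\<Union>z\<in>{-1, 0, 1}. B z) \<le> 15"
  proof -
    have "card (B z) \<le> 5" for z
      unfolding B_def using card_image_le[of "{c z - 2 .. c z + 2}" nat] by simp
    then have "(\<Sum>z\<in>{-1, 0, 1::int}. card (B z)) \<le> (\<Sum>z\<in>{-1, 0, 1::int}. 5)"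
      by (intro sum_mono)
    also have "\<dots> = 15"
      by simp
    finally show ?thesis
      using card_UN_le[of "{-1, 0, 1::int}" B] by simp
  qed
  ultimately show ?thesis
    by (meson card_mono order_trans)
qed

lemma Qhat_subset: "Qhat i j \<subseteq> {0..<1}"
  unfolding Qhat_def using dyadic_subset by blast

lemma dyadic_index_Qhat_subset: "dyadic_index (i + j) ` Qhat i j \<subseteq> dyadic_index (i + j) ` Q i j"
proof
  fix w assume "w \<in> dyadic_index (i + j) ` Qhat i j"
  then obtain x where x: "x \<in> Qhat i j" "w = dyadic_index (i + j) x"
    by blast
  then obtain m where m: "x \<in> dyadic (i + j) m" "dyadic (i + j) m \<inter> Q i j \<noteq> {}"
    unfolding Qhat_def by auto
  then obtain x' where "x' \<in> dyadic (i + j) m" "x' \<in> Q i j"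
    by blast
  then show "w \<in> dyadic_index (i + j) ` Q i j"
    using m(1) x(2) by (auto simp: mem_dyadic_iff)
qed

lemma card_dyadic_index_Qhat_le:
  assumes "0 < i" "T \<subseteq> Qhat i j"
  shows "card (dyadic_index (i + j) ` T) \<le> 15 * card (dyadic_index i ` T)"
proof -
  define G where "G a = dyadic_index (i + j) ` {x \<in> Q i j. dyadic_index i x = a}" for a
  have T: "T \<subseteq> {0..<1}"
    using assms(2) Qhat_subset by blast
  have "dyadic_index (i + j) ` T \<subseteq> (\<Union>a\<in>dyadic_index i ` T. G a)"
  proof
    fix w assume "w \<in> dyadic_index (i + j) ` T"
    then obtain x where x: "x \<in> T" "w = dyadic_index (i + j) x"
      by blast
    then have "w \<in> dyadic_index (i + j) ` Qhat i j"
      using assms(2) by blast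
    then have "w \<in> dyadic_index (i + j) ` Q i j"
      using dyadic_index_Qhat_subset by blast
    then obtain x' where x': "x' \<in> Q i j" "dyadic_index (i + j) x' = w"
      by (metis imageE)
    have "0 \<le> x" "0 \<le> x'"
      using x(1) T x'(1) unfolding Q_def by auto
    then have "dyadic_index i x' = dyadic_index i x"
      using dyadic_index_add_div[of x i j] dyadic_index_add_div[of x' i j] x(2) x'(2) by simp
    then have "w \<in> G (dyadic_index i x)"
      unfolding G_def using x' by (intro image_eqI[of _ _ x']) auto
    then show "w \<in> (\<Union>a\<in>dyadic_index i ` T. G a)"
      using x(1) by blast
  qed
  moreover have "finite (G a)" for a
    unfolding G_def by (rule finite_dyadic_index_image) (auto simp: Q_def)
  ultimately have "card (dyadic_index (i + j) ` T) \<le> card (\<Union>a\<in>dyadic_index i ` T. G a)"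
    using finite_dyadic_index_image[OF T] by (intro card_mono finite_UN_I) auto
  also have "\<dots> \<le> (\<Sum>a\<in>dyadic_index i ` T. card (G a))"
    by (rule card_UN_le) (rule finite_dyadic_index_image[OF T])
  also have "\<dots> \<le> (\<Sum>a\<in>dyadic_index i ` T. 15)"
    unfolding G_def using card_dyadic_index_Q_cell_le[OF assms(1)] by (intro sum_mono)
  finally show ?thesis
    by (simp add: mult.commute)
qed

lemma card_dyadic_index_Qhat_Inter_le:
  fixes i j :: "nat \<Rightarrow> nat"
  assumes "\<And>l. l \<le> q \<Longrightarrow> 0 < i l" "\<And>l. l < q \<Longrightarrow> i l + j l \<le> i (Suc l)"
  shows "card (dyadic_index (i q + j q) ` (\<Inter>l\<le>q. Qhat (i l) (j l))) * 2 ^ (\<Sum>l<q. j l)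
           \<le> 15 ^ Suc q * 2 ^ i q"
  using assms
proof (induction q)
  case 0
  have "card (dyadic_index (i 0 + j 0) ` Qhat (i 0) (j 0))
          \<le> 15 * card (dyadic_index (i 0) ` Qhat (i 0) (j 0))"
    using 0 by (intro card_dyadic_index_Qhat_le) auto
  also have "\<dots> \<le> 15 * 2 ^ i 0"
    using card_dyadic_index_image_le_power[OF Qhat_subset] by simp
  finally show ?case
    by simp
next
  case (Suc q)
  define S where "S = (\<Inter>l\<le>q. Qhat (i l) (j l))"
  define r where "r = i q + j q"
  define i' where "i' = i (Suc q)"
  define c where "c = card (dyadic_index r ` S)"
  define c' where "c' = card (dyadic_index (i' + j (Suc q)) ` (S \<inter> Qhat i' (j (Suc q))))"
  have S: "S \<subseteq> {0..<1}"
    unfolding S_def using Qhat_subset by blast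
  have IH: "c * 2 ^ (\<Sum>l<q. j l) \<le> 15 ^ Suc q * 2 ^ i q"
    using Suc unfolding c_def S_def r_def by simp
  have r: "r \<le> i'" "i' - r + j q + i q = i'"
    using Suc.prems(2)[of q] unfolding r_def i'_def by auto
  have "c' \<le> 15 * card (dyadic_index i' ` (S \<inter> Qhat i' (j (Suc q))))"
    unfolding c'_def i'_def using Suc.prems(1) by (intro card_dyadic_index_Qhat_le) auto
  also have "\<dots> \<le> 15 * card (dyadic_index i' ` S)"
    using finite_dyadic_index_image[OF S] by (intro mult_left_mono card_mono) auto
  also have "\<dots> \<le> 15 * (2 ^ (i' - r) * c)"
    unfolding c_def using card_dyadic_index_image_le[OF S r(1)] by simp
  finally have step: "c' \<le> 15 * 2 ^ (i' - r) * c"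
    by simp
  have "c' * 2 ^ (\<Sum>l<Suc q. j l) = c' * 2 ^ j q * 2 ^ (\<Sum>l<q. j l)"
    by (simp add: power_add)
  also have "\<dots> \<le> 15 * 2 ^ (i' - r) * 2 ^ j q * (c * 2 ^ (\<Sum>l<q. j l))"
    using step by (simp add: algebra_simps)
  also have "\<dots> \<le> 15 * 2 ^ (i' - r) * 2 ^ j q * (15 ^ Suc q * 2 ^ i q)"
    using IH by (intro mult_left_mono) auto
  also have "\<dots> = 15 ^ Suc (Suc q) * 2 ^ (i' - r + j q + i q)"
    by (simp add: power_add)
  finally have "c' * 2 ^ (\<Sum>l<Suc q. j l) \<le> 15 ^ Suc (Suc q) * 2 ^ i'"
    unfolding r(2) .
  then show ?case
    unfolding c'_def S_def i'_def by (simp add: atMost_Suc Int_commute)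
qed

lemma Fset_gap:
  assumes "(is, js) \<in> Fset \<epsilon> n m" "Suc l < length is"
  shows "is ! l + js ! l \<le> is ! Suc l"
proof -
  have "is ! l < is ! Suc l"
    using assms unfolding Fset_def by (auto simp: sorted_wrt_iff_nth_less)
  moreover have "js ! l \<le> is ! Suc l - is ! l"
    using assms unfolding Fset_def by auto
  ultimately show ?thesis
    by linarith
qed

lemma card_dyadic_index_Qhat_multi_mult_le:
  assumes F: "(is, js) \<in> Fset \<epsilon> n m"
  shows "card (dyadic_index (n + m) ` Qhat_multi is js) * 2 ^ (\<Sum>l<length is - 1. js ! l)
           \<le> 15 ^ length is * 2 ^ n"
proof -
  define q where "q = length is - 1"
  have len: "Suc q = length is"
    using F unfolding Fset_def q_def by auto
  have last: "is ! q = n" "js ! q = m"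
    using F unfolding Fset_def q_def by auto
  have Inter: "Qhat_multi is js = (\<Inter>l\<le>q. Qhat (is ! l) (js ! l))"
    unfolding Qhat_multi_def len[symmetric] lessThan_Suc_atMost ..
  show ?thesis
    unfolding q_def[symmetric] unfolding Inter len[symmetric] last[symmetric]
  proof (intro card_dyadic_index_Qhat_Inter_le)
    show "0 < is ! l" if "l \<le> q" for l
      using F that len unfolding Fset_def by auto
    show "is ! l + js ! l \<le> is ! Suc l" if "l < q" for l
      using Fset_gap[OF F] that len by simp
  qed
qed

lemma card_dyadic_index_Qhat_multi_le:
  assumes F: "(is, js) \<in> Fset \<epsilon> n m"
  shows "real (card (dyadic_index (n + m) ` Qhat_multi is js)) \<le> 2 powr ((\<epsilon> + \<epsilon> * log 2 15) * n)"
proof -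
  define s where "s = (\<Sum>l<length is - 1. js ! l)"
  define c where "c = card (dyadic_index (n + m) ` Qhat_multi is js)"
  have "real (c * 2 ^ s) \<le> real (15 ^ length is * 2 ^ n)"
    unfolding c_def s_def using card_dyadic_index_Qhat_multi_mult_le[OF F] by (rule of_nat_mono)
  then have "real c \<le> 15 ^ length is * (2 ^ n / 2 ^ s)"
    by (simp add: field_simps)
  also have "\<dots> \<le> 2 powr (\<epsilon> * log 2 15 * n) * 2 powr (\<epsilon> * n)"
  proof (intro mult_mono)
    have "real (length is) \<le> \<epsilon> * n"
      using F unfolding Fset_def by auto
    then have "(15::real) ^ length is \<le> 15 powr (\<epsilon> * n)"
      by (simp add: powr_realpow[symmetric])
    also have "\<dots> = (2 powr log 2 15) powr (\<epsilon> * n)"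
      by simp
    also have "\<dots> = 2 powr (\<epsilon> * log 2 15 * n)"
      by (simp only: powr_powr) (simp add: algebra_simps)
    finally show "(15::real) ^ length is \<le> 2 powr (\<epsilon> * log 2 15 * n)" .
    have "real n - s \<le> \<epsilon> * n"
      using F unfolding Fset_def s_def by (auto simp: of_nat_sum)
    then show "(2::real) ^ n / 2 ^ s \<le> 2 powr (\<epsilon> * n)"
      by (simp add: powr_realpow[symmetric] powr_diff[symmetric])
  qed auto
  also have "\<dots> = 2 powr ((\<epsilon> + \<epsilon> * log 2 15) * n)"
    by (simp add: powr_add[symmetric] algebra_simps)
  finally show ?thesis
    unfolding c_def .
qed

section \<open>Counting the index sets F\<close>

definition small_subsets :: "'a set \<Rightarrow> real \<Rightarrow> 'a set set" where
  "small_subsets A c = {S. S \<subseteq> A \<and> real (card S) \<le> c}"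

lemma card_small_subsets_le:
  fixes x c :: real
  assumes "finite A" "0 < x" "x \<le> 1"
  shows "real (card (small_subsets A c)) \<le> x powr (- c) * (1 + x) ^ card A"
proof -
  define K where "K = {k. k \<le> card A \<and> real k \<le> c}"
  have "small_subsets A c = (\<Union>k\<in>K. {S. S \<subseteq> A \<and> card S = k})"
    unfolding K_def small_subsets_def using assms(1) card_mono by fastforce
  then have "card (small_subsets A c) \<le> (\<Sum>k\<in>K. card {S. S \<subseteq> A \<and> card S = k})"
    unfolding K_def by (simp add: card_UN_le)
  also have "\<dots> = (\<Sum>k\<in>K. card A choose k)"
    using assms(1) by (simp add: n_subsets)
  finally have "real (card (small_subsets A c)) \<le> (\<Sum>k\<in>K. real (card A choose k))"
    by (metis of_nat_le_iff of_nat_sum)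
  also have "\<dots> \<le> (\<Sum>k\<in>K. real (card A choose k) * x ^ k * x powr (- c))"
  proof (rule sum_mono)
    fix k assume "k \<in> K"
    then have "x powr 0 \<le> x powr (real k - c)"
      using assms(2,3) unfolding K_def by (intro powr_mono') auto
    also have "\<dots> = x ^ k * x powr (- c)"
      using assms(2) by (simp add: powr_diff powr_realpow powr_minus divide_inverse)
    finally show "real (card A choose k) \<le> real (card A choose k) * x ^ k * x powr (- c)"
      using assms(2) by (simp add: mult_le_cancel_left1 mult.assoc)
  qed
  also have "\<dots> \<le> (\<Sum>k\<le>card A. real (card A choose k) * x ^ k * x powr (- c))"
    using assms(2) unfolding K_def by (intro sum_mono2) auto
  also have "\<dots> = x powr (- c) * (\<Sum>k\<le>card A. real (card A choose k) * x ^ k * 1 ^ (card A - k))"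
    by (simp add: sum_distrib_left mult.commute)
  also have "\<dots> = x powr (- c) * (1 + x) ^ card A"
    using binomial_ring[of x 1 "card A"] by (simp add: add.commute)
  finally show ?thesis .
qed

lemma Fset_nth_le:
  assumes F: "(is, js) \<in> Fset \<epsilon> n m" and l: "l < length is"
  shows "is ! l \<le> n"
proof (cases "l = length is - 1")
  case False
  then have "is ! l < is ! (length is - 1)"
    using F l unfolding Fset_def sorted_wrt_iff_nth_less by auto
  then show ?thesis
    using F unfolding Fset_def by auto
qed (use F in \<open>auto simp: Fset_def\<close>)

definition block_ends :: "nat list \<Rightarrow> nat list \<Rightarrow> nat list" where
  "block_ends is js = map (\<lambda>l. is ! l + js ! l) [0..<length is - 1]"

lemma sorted_block_ends:
  assumes F: "(is, js) \<in> Fset \<epsilon> n m"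
  shows "sorted_wrt (<) (block_ends is js)"
  unfolding sorted_wrt_iff_nth_less
proof (intro allI impI)
  fix a b assume ab: "a < b" "b < length (block_ends is js)"
  then have b: "Suc b < length is"
    unfolding block_ends_def by simp
  have "is ! a + js ! a \<le> is ! Suc a"
    using Fset_gap[OF F] ab b by simp
  also have "\<dots> \<le> is ! b"
  proof (cases "Suc a = b")
    case False
    then have "Suc a < b"
      using ab by simp
    then show ?thesis
      using F b unfolding Fset_def sorted_wrt_iff_nth_less by (auto intro: less_imp_le)
  qed simp
  also have "\<dots> < is ! b + js ! b"
    using F b unfolding Fset_def by auto
  finally show "block_ends is js ! a < block_ends is js ! b"
    using ab b unfolding block_ends_def by simp
qed

(* An element of F^{n,m} is determined by its start points i_l and its block ends i_l + j_l
   (l < k), since j_k = m. *)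
definition Fset_code :: "nat list \<times> nat list \<Rightarrow> nat set \<times> nat set" where
  "Fset_code = (\<lambda>(is, js). (set is, set (block_ends is js)))"

lemma inj_on_Fset_code: "inj_on Fset_code (Fset \<epsilon> n m)"
  unfolding Fset_code_def
proof (rule inj_onI, clarify)
  fix "is" js is' js'
  assume F: "(is, js) \<in> Fset \<epsilon> n m" and F': "(is', js') \<in> Fset \<epsilon> n m"
    and eq: "set is = set is'" "set (block_ends is js) = set (block_ends is' js')"
  show "is = is' \<and> js = js'"
  proof
    show ii: "is = is'"
      using F F' eq(1) unfolding Fset_def by (auto intro: strict_sorted_equal)
    have ends: "block_ends is js = block_ends is js'"
      using eq(2) sorted_block_ends[OF F] sorted_block_ends[OF F'] unfolding ii
      by (auto intro: strict_sorted_equal)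
    show "js = js'"
    proof (rule nth_equalityI)
      show "length js = length js'"
        using F F' ii unfolding Fset_def by auto
      fix l assume l: "l < length js"
      show "js ! l = js' ! l"
      proof (cases "Suc l < length is")
        case True
        then have "[0..<length is - 1] ! l = l"
          by simp
        then show ?thesis
          using arg_cong[OF ends, of "\<lambda>xs. xs ! l"] True unfolding block_ends_def by simp
      next
        case False
        then have "l = length is - 1"
          using l F unfolding Fset_def by auto
        then show ?thesis
          using F F' ii unfolding Fset_def by auto
      qed
    qed
  qed
qed

lemma Fset_code_image_subset:
  "Fset_code ` Fset \<epsilon> n m \<subseteq> small_subsets {1..n} (\<epsilon> * n) \<times> small_subsets {1..n} (\<epsilon> * n)"
proof (rule image_subsetI)
  fix F assume F: "F \<in> Fset \<epsilon> n m"
  obtain "is" js where F_eq: "F = (is, js)"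
    by fastforce
  have F': "(is, js) \<in> Fset \<epsilon> n m"
    using F unfolding F_eq .
  have len: "real (length is) \<le> \<epsilon> * n"
    using F' unfolding Fset_def by auto
  have "set is \<subseteq> {1..n}"
    using F' Fset_nth_le[OF F'] unfolding Fset_def by (auto simp: in_set_conv_nth Suc_le_eq)
  moreover have "real (card (set is)) \<le> \<epsilon> * n"
    using card_length[of "is"] len by linarith
  moreover have "is ! l + js ! l \<in> {1..n}" if "Suc l < length is" for l
  proof -
    have "0 < js ! l"
      using F' Suc_lessD[OF that] unfolding Fset_def by auto
    then show ?thesis
      using Fset_gap[OF F' that] Fset_nth_le[OF F' that] by auto
  qed
  then have "set (block_ends is js) \<subseteq> {1..n}"
    unfolding block_ends_def by auto
  moreover have "card (set (block_ends is js)) \<le> length is"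
    using card_length[of "block_ends is js"] unfolding block_ends_def by simp
  then have "real (card (set (block_ends is js))) \<le> \<epsilon> * n"
    using len by linarith
  ultimately show "Fset_code F \<in> small_subsets {1..n} (\<epsilon> * n) \<times> small_subsets {1..n} (\<epsilon> * n)"
    unfolding F_eq Fset_code_def small_subsets_def by simp
qed

lemma finite_Fset: "finite (Fset \<epsilon> n m)"
proof (rule finite_imageD[OF _ inj_on_Fset_code])
  show "finite (Fset_code ` Fset \<epsilon> n m)"
    using Fset_code_image_subset by (rule finite_subset) (simp add: small_subsets_def)
qed

(* The bound of card_small_subsets_le at x = min 1 eps, squared for the two sets of Fset_code. *)
definition Fset_exponent :: "real \<Rightarrow> real" where
  "Fset_exponent \<epsilon> = 2 * log 2 (1 + min 1 \<epsilon>) - 2 * \<epsilon> * log 2 (min 1 \<epsilon>)"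

lemma card_Fset_le:
  assumes "0 < \<epsilon>"
  shows "real (card (Fset \<epsilon> n m)) \<le> 2 powr (Fset_exponent \<epsilon> * n)"
proof -
  define P where "P = small_subsets {1..n} (\<epsilon> * n)"
  define x where "x = min 1 \<epsilon>"
  have x: "0 < x" "x \<le> 1"
    using assms unfolding x_def by auto
  have "card (Fset \<epsilon> n m) = card (Fset_code ` Fset \<epsilon> n m)"
    using inj_on_Fset_code by (rule card_image[symmetric])
  also have "\<dots> \<le> card (P \<times> P)"
    unfolding P_def using Fset_code_image_subset by (rule card_mono[rotated]) (simp add: small_subsets_def)
  finally have "real (card (Fset \<epsilon> n m)) \<le> real (card P) * real (card P)"
    by (simp add: card_cartesian_product flip: of_nat_mult)
  also have "\<dots> \<le> (x powr (- (\<epsilon> * n)) * (1 + x) ^ n) * (x powr (- (\<epsilon> * n)) * (1 + x) ^ n)"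
    using card_small_subsets_le[of "{1..n}" x "\<epsilon> * n"] x unfolding P_def
    by (intro mult_mono) auto
  also have "x powr (- (\<epsilon> * n)) * (1 + x) ^ n = 2 powr ((log 2 (1 + x) - \<epsilon> * log 2 x) * n)"
  proof -
    have "x powr (- (\<epsilon> * n)) = 2 powr (- (\<epsilon> * log 2 x * n))"
      using x by (simp add: powr_def log_def field_simps)
    moreover have "(1 + x) ^ n = 2 powr (log 2 (1 + x) * n)"
      using x by (simp add: powr_def log_def field_simps flip: powr_realpow)
    ultimately show ?thesis
      by (simp add: powr_add[symmetric] algebra_simps)
  qed
  also have "2 powr ((log 2 (1 + x) - \<epsilon> * log 2 x) * n) * 2 powr ((log 2 (1 + x) - \<epsilon> * log 2 x) * n)
      = 2 powr (Fset_exponent \<epsilon> * n)"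
    unfolding Fset_exponent_def x_def[symmetric] by (simp add: powr_add[symmetric] algebra_simps)
  finally show ?thesis .
qed

lemma Fset_exponent_pos:
  assumes "0 < \<epsilon>"
  shows "0 < Fset_exponent \<epsilon>"
proof -
  have "0 < log 2 (1 + min 1 \<epsilon>)"
    using assms by simp
  moreover have "\<epsilon> * log 2 (min 1 \<epsilon>) \<le> 0"
    using assms by (intro mult_nonneg_nonpos) auto
  ultimately show ?thesis
    unfolding Fset_exponent_def by linarith
qed

lemma Fset_exponent_tendsto_zero: "(Fset_exponent \<longlongrightarrow> 0) (at_right 0)"
proof -
  have ev: "\<forall>\<^sub>F \<epsilon> in at_right 0. 2 * log 2 (1 + \<epsilon>) - 2 * \<epsilon> * log 2 \<epsilon> = Fset_exponent \<epsilon>"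
    using eventually_at_right_real[OF zero_less_one] by eventually_elim (simp add: Fset_exponent_def)
  have lim: "((\<lambda>\<epsilon>::real. 2 * log 2 (1 + \<epsilon>) - 2 * \<epsilon> * log 2 \<epsilon>) \<longlongrightarrow> 0) (at_right 0)"
    by real_asymp
  show ?thesis
    using Lim_transform_eventually[OF lim ev] .
qed

section \<open>Hausdorff measure of limsup sets of dyadic cells\<close>

lemma hcontent_le_triple_sum:
  fixes u :: "nat \<Rightarrow> nat \<Rightarrow> nat \<Rightarrow> real set"
  assumes "\<And>a b w. u a b w \<subseteq> {0..<1}" "\<And>a b w. circ_diam (u a b w) \<le> \<delta>"
    and "A \<subseteq> (\<Union>a. \<Union>b. \<Union>w. u a b w)"
  shows "hcontent s \<delta> A \<le> (\<Sum>a. \<Sum>b. \<Sum>w. ennreal (circ_diam (u a b w) powr s))"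
proof -
  define f where "f a b w = ennreal (circ_diam (u a b w) powr s)" for a b w
  define U where "U k = (case prod_decode k of (a, c) \<Rightarrow> case prod_decode c of (b, w) \<Rightarrow> u a b w)" for k
  have "A \<subseteq> (\<Union>k. U k)"
  proof
    fix x assume "x \<in> A"
    then obtain a b w where "x \<in> u a b w"
      using assms(3) by blast
    then have "x \<in> U (prod_encode (a, prod_encode (b, w)))"
      unfolding U_def by simp
    then show "x \<in> (\<Union>k. U k)"
      by blast
  qed
  moreover have "U k \<subseteq> {0..<1} \<and> circ_diam (U k) \<le> \<delta>" for k
    unfolding U_def using assms(1,2) by (simp split: prod.split)
  ultimately have "hcontent s \<delta> A \<le> (\<Sum>k. ennreal (circ_diam (U k) powr s))"
    unfolding hcontent_def by (intro INF_lower) blast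
  also have "\<dots> = (\<Sum>k. (\<lambda>(a, c). (\<lambda>(b, w). f a b w) (prod_decode c)) (prod_decode k))"
    unfolding U_def f_def by (intro suminf_cong) (simp split: prod.split)
  also have "\<dots> = (\<Sum>a. \<Sum>c. (\<lambda>(b, w). f a b w) (prod_decode c))"
    by (rule suminf_ennreal_2dimen) simp
  also have "\<dots> = (\<Sum>a. \<Sum>b. \<Sum>w. f a b w)"
    by (intro suminf_cong suminf_ennreal_2dimen) simp
  finally show ?thesis
    unfolding f_def .
qed

lemma suminf_suminf_geometric_ennreal:
  fixes c \<rho> \<sigma> :: real
  assumes "0 \<le> c" "0 \<le> \<rho>" "\<rho> < 1" "0 \<le> \<sigma>" "\<sigma> < 1"
  shows "(\<Sum>a. \<Sum>b. ennreal (c * \<rho> ^ a * \<sigma> ^ b)) = ennreal (c / ((1 - \<rho>) * (1 - \<sigma>)))"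
proof -
  have "(\<Sum>b. ennreal (c * \<rho> ^ a * \<sigma> ^ b)) = ennreal (c * \<rho> ^ a / (1 - \<sigma>))" for a
  proof (rule suminf_ennreal_eq)
    show "(\<lambda>b. c * \<rho> ^ a * \<sigma> ^ b) sums (c * \<rho> ^ a / (1 - \<sigma>))"
      using sums_mult[OF geometric_sums, of \<sigma> "c * \<rho> ^ a"] assms by simp
  qed (use assms in simp)
  moreover have "(\<Sum>a. ennreal (c * \<rho> ^ a / (1 - \<sigma>))) = ennreal (c / ((1 - \<rho>) * (1 - \<sigma>)))"
  proof (rule suminf_ennreal_eq)
    show "(\<lambda>a. c * \<rho> ^ a / (1 - \<sigma>)) sums (c / ((1 - \<rho>) * (1 - \<sigma>)))"
      using sums_divide[OF sums_mult[OF geometric_sums, of \<rho> c], of "1 - \<sigma>"] assms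
      by (simp add: field_simps)
  qed (use assms in simp)
  ultimately show ?thesis
    by simp
qed

lemma sum_circ_diam_dyadic_le:
  assumes "finite W" "0 \<le> s"
  shows "(\<Sum>w\<in>W. ennreal (circ_diam (dyadic r w) powr s)) \<le> ennreal (card W * 2 powr (- s * r))"
proof -
  have "(\<Sum>w\<in>W. ennreal (circ_diam (dyadic r w) powr s)) \<le> (\<Sum>w\<in>W. ennreal ((1 / 2 ^ r) powr s))"
    using circ_diam_dyadic_le circ_diam_nonneg assms(2) by (intro sum_mono ennreal_leI powr_mono2) auto
  also have "(1 / 2 ^ r :: real) powr s = 2 powr (- s * r)"
    by (simp add: powr_divide powr_minus_divide powr_powr powr_realpow[symmetric] mult.commute)
  finally show ?thesis
    by (simp add: ennreal_mult ennreal_of_nat_eq_real_of_nat)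
qed

lemma hcontent_le_dyadic_cells:
  fixes W :: "nat \<Rightarrow> nat \<Rightarrow> nat set" and s \<delta> :: real
  assumes W_finite: "\<And>a m. finite (W a m)" and W_less: "\<And>a m w. w \<in> W a m \<Longrightarrow> w < 2 ^ (a + N + m)"
    and cover: "A \<subseteq> (\<Union>a. \<Union>m. \<Union>w\<in>W a m. dyadic (a + N + m) w)"
    and s: "0 \<le> s" and \<delta>: "1 / 2 ^ N \<le> \<delta>"
  shows "hcontent s \<delta> A \<le> (\<Sum>a. \<Sum>m. ennreal (card (W a m) * 2 powr (- s * (a + N + m))))"
proof -
  define u where "u a m w = (if w \<in> W a m then dyadic (a + N + m) w else {})" for a m w
  have "u a m w \<subseteq> {0..<1}" for a m w
    unfolding u_def using W_less dyadic_subset by simp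
  moreover have "circ_diam (u a m w) \<le> \<delta>" for a m w
  proof (cases "w \<in> W a m")
    case True
    then have "circ_diam (u a m w) \<le> 1 / 2 ^ (a + N + m)"
      unfolding u_def using circ_diam_dyadic_le by simp
    also have "\<dots> \<le> 1 / 2 ^ N"
      by (intro divide_left_mono power_increasing) auto
    finally show ?thesis
      using \<delta> by linarith
  next
    case False
    have "0 \<le> \<delta>"
      by (rule order_trans[OF _ \<delta>]) simp
    then show ?thesis
      using False unfolding u_def circ_diam_def by simp
  qed
  moreover have "A \<subseteq> (\<Union>a. \<Union>m. \<Union>w. u a m w)"
    using cover unfolding u_def by (auto split: if_splits)
  ultimately have "hcontent s \<delta> A \<le> (\<Sum>a. \<Sum>m. \<Sum>w. ennreal (circ_diam (u a m w) powr s))"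
    by (rule hcontent_le_triple_sum)
  also have "\<dots> \<le> (\<Sum>a. \<Sum>m. ennreal (card (W a m) * 2 powr (- s * (a + N + m))))"
  proof (intro suminf_le summableI allI)
    fix a m
    have "(\<Sum>w. ennreal (circ_diam (u a m w) powr s)) = (\<Sum>w\<in>W a m. ennreal (circ_diam (u a m w) powr s))"
      by (rule suminf_finite) (auto simp: u_def W_finite circ_diam_def)
    also have "\<dots> = (\<Sum>w\<in>W a m. ennreal (circ_diam (dyadic (a + N + m) w) powr s))"
      unfolding u_def by simp
    also have "\<dots> \<le> ennreal (card (W a m) * 2 powr (- s * (a + N + m)))"
      using W_finite s by (rule sum_circ_diam_dyadic_le)
    finally show "(\<Sum>w. ennreal (circ_diam (u a m w) powr s))
                    \<le> ennreal (card (W a m) * 2 powr (- s * (a + N + m)))" .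
  qed
  finally show ?thesis .
qed

lemma hcontent_dyadic_cover_le:
  fixes E :: "nat \<Rightarrow> nat \<Rightarrow> real set" and t s :: real
  assumes E: "\<And>n m. E n m \<subseteq> {0..<1}"
    and card: "\<And>n m. real (card (dyadic_index (n + m) ` E n m)) \<le> 2 powr (t * n)"
    and cover: "A \<subseteq> (\<Union>n\<in>{N..}. \<Union>m. E n m)"
    and s: "t < s" "0 < s" and \<delta>: "1 / 2 ^ N \<le> \<delta>"
  shows "hcontent s \<delta> A
           \<le> ennreal ((2 powr (t - s)) ^ N / ((1 - 2 powr (t - s)) * (1 - 2 powr (- s))))"
proof -
  define \<rho> :: real where "\<rho> = 2 powr (t - s)"
  define \<sigma> :: real where "\<sigma> = 2 powr (- s)"
  define W where "W a m = dyadic_index (a + N + m) ` E (a + N) m" for a m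
  have "finite (W a m)" for a m
    unfolding W_def using E by (rule finite_dyadic_index_image)
  moreover have "w < 2 ^ (a + N + m)" if "w \<in> W a m" for a m w
    using that E dyadic_index_less unfolding W_def by fastforce
  moreover have "A \<subseteq> (\<Union>a. \<Union>m. \<Union>w\<in>W a m. dyadic (a + N + m) w)"
  proof
    fix x assume "x \<in> A"
    then obtain n m where nm: "N \<le> n" "x \<in> E n m"
      using cover by blast
    moreover have "0 \<le> x"
      using E nm(2) by fastforce
    ultimately have "x \<in> dyadic (n - N + N + m) (dyadic_index (n - N + N + m) x)"
      "dyadic_index (n - N + N + m) x \<in> W (n - N) m"
      unfolding W_def by (auto simp: mem_dyadic_iff)
    then show "x \<in> (\<Union>a. \<Union>m. \<Union>w\<in>W a m. dyadic (a + N + m) w)"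
      by blast
  qed
  ultimately have "hcontent s \<delta> A \<le> (\<Sum>a. \<Sum>m. ennreal (card (W a m) * 2 powr (- s * (a + N + m))))"
    using s \<delta> by (intro hcontent_le_dyadic_cells) auto
  also have "\<dots> \<le> (\<Sum>a. \<Sum>m. ennreal (\<rho> ^ N * \<rho> ^ a * \<sigma> ^ m))"
  proof (intro suminf_le summableI allI ennreal_leI)
    fix a m
    have pow: "(2 powr x) ^ k = 2 powr (x * k)" for x :: real and k :: nat
      using powr_power[of 2 x k] by (simp add: mult.commute)
    have "card (W a m) * 2 powr (- s * (a + N + m)) \<le> 2 powr (t * (a + N)) * 2 powr (- s * (a + N + m))"
      using card[of "a + N" m] unfolding W_def by (intro mult_right_mono) auto
    also have "\<dots> = \<rho> ^ N * \<rho> ^ a * \<sigma> ^ m"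
      unfolding \<rho>_def \<sigma>_def pow by (simp only: flip: powr_add) (simp add: algebra_simps)
    finally show "card (W a m) * 2 powr (- s * (a + N + m)) \<le> \<rho> ^ N * \<rho> ^ a * \<sigma> ^ m" .
  qed
  also have "\<dots> = ennreal (\<rho> ^ N / ((1 - \<rho>) * (1 - \<sigma>)))"
    using s powr_less_one[of 2 "t - s"] powr_less_one[of 2 "- s"] unfolding \<rho>_def \<sigma>_def
    by (intro suminf_suminf_geometric_ennreal) auto
  finally show ?thesis
    unfolding \<rho>_def \<sigma>_def .
qed

lemma hmeasure_dyadic_limsup_zero:
  fixes E :: "nat \<Rightarrow> nat \<Rightarrow> real set" and t s :: real
  assumes E: "\<And>n m. E n m \<subseteq> {0..<1}"
    and card: "\<And>n m. real (card (dyadic_index (n + m) ` E n m)) \<le> 2 powr (t * n)"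
    and cover: "\<And>N. A \<subseteq> (\<Union>n\<in>{N..}. \<Union>m. E n m)"
    and s: "t < s" "0 < s"
  shows "hmeasure s A = 0"
proof -
  define \<rho> :: real where "\<rho> = 2 powr (t - s)"
  define C where "C = 1 / ((1 - \<rho>) * (1 - 2 powr (- s)))"
  have "hcontent s \<delta> A \<le> 0" if "0 < \<delta>" for \<delta>
  proof (rule ennreal_le_epsilon)
    fix \<eta> :: real assume "0 < \<eta>"
    have "(\<lambda>N. \<rho> ^ N * C) \<longlonglongrightarrow> 0"
      using s powr_less_one[of 2 "t - s"] unfolding \<rho>_def
      by (intro tendsto_mult_left_zero LIMSEQ_power_zero) auto
    moreover have "(\<lambda>N. (1 / 2) ^ N :: real) \<longlonglongrightarrow> 0"
      by (intro LIMSEQ_power_zero) simp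
    ultimately have "\<forall>\<^sub>F N in sequentially. \<rho> ^ N * C < \<eta> \<and> (1 / 2) ^ N < \<delta>"
      using \<open>0 < \<eta>\<close> \<open>0 < \<delta>\<close> by (auto intro: eventually_conj order_tendstoD(2))
    then obtain N where N: "\<rho> ^ N * C < \<eta>" "(1 / 2) ^ N < \<delta>"
      by (auto dest: eventually_happens)
    have "hcontent s \<delta> A \<le> ennreal (\<rho> ^ N * C)"
      using hcontent_dyadic_cover_le[OF E card cover s, of N \<delta>] N(2)
      unfolding \<rho>_def C_def by (simp add: power_one_over)
    also have "\<dots> \<le> 0 + ennreal \<eta>"
      using N(1) by (simp add: ennreal_leI)
    finally show "hcontent s \<delta> A \<le> 0 + ennreal \<eta>" .
  qed
  then have "hmeasure s A \<le> 0"
    unfolding hmeasure_def by (intro SUP_least) auto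
  then show ?thesis
    by simp
qed

lemma hdim_le:
  assumes "0 \<le> t" "\<And>s. t < s \<Longrightarrow> hmeasure s A = 0"
  shows "hdim A \<le> t"
  unfolding hdim_def
proof (rule dense_ge)
  fix s assume "t < s"
  then have "s \<in> {s. 0 \<le> s \<and> hmeasure s A = 0}"
    using assms by simp
  then show "Inf {s. 0 \<le> s \<and> hmeasure s A = 0} \<le> s"
    by (rule cInf_lower) (rule bdd_belowI[of _ 0], simp)
qed

section \<open>The set Z\<close>

definition Zslice :: "real \<Rightarrow> nat \<Rightarrow> nat \<Rightarrow> real set" where
  "Zslice \<epsilon> n m = (\<Union>(is, js)\<in>Fset \<epsilon> n m. Qhat_multi is js)"

lemma Zset_subset_Zslice: "Zset \<epsilon> \<subseteq> (\<Union>n\<in>{N..}. \<Union>m. Zslice \<epsilon> n m)"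
proof
  fix x assume "x \<in> Zset \<epsilon>"
  then have "x \<in> (\<Union>n\<in>{max 1 N..}. \<Union>m\<in>{1..}. \<Union>(is, js)\<in>Fset \<epsilon> n m. Qhat_multi is js)"
    unfolding Zset_def by (rule INT_D) simp
  then show "x \<in> (\<Union>n\<in>{N..}. \<Union>m. Zslice \<epsilon> n m)"
    unfolding Zslice_def by force
qed

lemma Zslice_subset: "Zslice \<epsilon> n m \<subseteq> {0..<1}"
proof
  fix x assume "x \<in> Zslice \<epsilon> n m"
  then obtain "is" js where "(is, js) \<in> Fset \<epsilon> n m" "x \<in> Qhat_multi is js"
    unfolding Zslice_def by blast
  then have "x \<in> Qhat (is ! 0) (js ! 0)"
    unfolding Fset_def Qhat_multi_def by auto
  then show "x \<in> {0..<1}"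
    using Qhat_subset by blast
qed

lemma card_dyadic_index_Zslice_le:
  assumes "0 < \<epsilon>"
  shows "real (card (dyadic_index (n + m) ` Zslice \<epsilon> n m))
           \<le> 2 powr ((Fset_exponent \<epsilon> + \<epsilon> + \<epsilon> * log 2 15) * n)"
proof -
  have "card (dyadic_index (n + m) ` Zslice \<epsilon> n m)
          \<le> (\<Sum>F\<in>Fset \<epsilon> n m. card (dyadic_index (n + m) ` Qhat_multi (fst F) (snd F)))"
    unfolding Zslice_def image_UN split_beta using finite_Fset by (rule card_UN_le)
  then have "real (card (dyadic_index (n + m) ` Zslice \<epsilon> n m))
               \<le> (\<Sum>F\<in>Fset \<epsilon> n m. real (card (dyadic_index (n + m) ` Qhat_multi (fst F) (snd F))))"
    unfolding of_nat_sum[symmetric] by (rule of_nat_mono)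
  also have "\<dots> \<le> (\<Sum>F\<in>Fset \<epsilon> n m. 2 powr ((\<epsilon> + \<epsilon> * log 2 15) * n))"
  proof (rule sum_mono)
    fix F assume "F \<in> Fset \<epsilon> n m"
    then show "real (card (dyadic_index (n + m) ` Qhat_multi (fst F) (snd F)))
                 \<le> 2 powr ((\<epsilon> + \<epsilon> * log 2 15) * n)"
      using card_dyadic_index_Qhat_multi_le[of "fst F" "snd F"] by simp
  qed
  also have "\<dots> = real (card (Fset \<epsilon> n m)) * 2 powr ((\<epsilon> + \<epsilon> * log 2 15) * n)"
    by simp
  also have "\<dots> \<le> 2 powr (Fset_exponent \<epsilon> * n) * 2 powr ((\<epsilon> + \<epsilon> * log 2 15) * n)"
    using card_Fset_le[OF assms] by (rule mult_right_mono) simp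
  also have "\<dots> = 2 powr ((Fset_exponent \<epsilon> + \<epsilon> + \<epsilon> * log 2 15) * n)"
    by (simp add: powr_add[symmetric] algebra_simps)
  finally show ?thesis .
qed

theorem proposition4p6:
  shows "\<exists>\<epsilon>' :: real \<Rightarrow> real.
     (\<forall>\<epsilon> > 0. \<epsilon>' \<epsilon> > 0) \<and> (\<epsilon>' \<longlongrightarrow> 0) (at_right 0) \<and>
     (\<forall>\<epsilon> > 0.
        (\<exists>C. \<forall>n m. real (card (Fset \<epsilon> n m)) \<le> C * 2 powr (\<epsilon>' \<epsilon> * real n)) \<and>
        hdim (Zset \<epsilon>) \<le> \<epsilon>' \<epsilon> + \<epsilon> + \<epsilon> * log 2 15)"
proof (intro exI[of _ Fset_exponent] conjI allI impI)
  fix \<epsilon> :: real assume "0 < \<epsilon>"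
  then show "0 < Fset_exponent \<epsilon>"
    by (rule Fset_exponent_pos)
next
  show "(Fset_exponent \<longlongrightarrow> 0) (at_right 0)"
    by (rule Fset_exponent_tendsto_zero)
next
  fix \<epsilon> :: real assume "0 < \<epsilon>"
  then show "\<exists>C. \<forall>n m. real (card (Fset \<epsilon> n m)) \<le> C * 2 powr (Fset_exponent \<epsilon> * real n)"
    using card_Fset_le by (intro exI[of _ 1]) simp
next
  fix \<epsilon> :: real assume \<epsilon>: "0 < \<epsilon>"
  show "hdim (Zset \<epsilon>) \<le> Fset_exponent \<epsilon> + \<epsilon> + \<epsilon> * log 2 15"
  proof (rule hdim_le)
    show "0 \<le> Fset_exponent \<epsilon> + \<epsilon> + \<epsilon> * log 2 15"
      using Fset_exponent_pos[OF \<epsilon>] \<epsilon> by simp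
    fix s assume "Fset_exponent \<epsilon> + \<epsilon> + \<epsilon> * log 2 15 < s"
    moreover have "0 < s"
      using calculation \<open>0 \<le> Fset_exponent \<epsilon> + \<epsilon> + \<epsilon> * log 2 15\<close> by linarith
    ultimately show "hmeasure s (Zset \<epsilon>) = 0"
      using Zslice_subset card_dyadic_index_Zslice_le[OF \<epsilon>] Zset_subset_Zslice
      by (intro hmeasure_dyadic_limsup_zero)
  qed
qed

end
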